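(* For any $n\ge2$, $\theta\in(0,1/2)$ and $0<\mu\le 9/50$, for all $\mathbf w\in\mathbb R^{n-1}$ with $\frac{\mu}{4\sqrt2}\le\|\mathbf w\|\le\frac1{20\sqrt5}$, $$\frac{\mathbf w^*\nabla_{\mathbf w}\mathbb E\big[h_\mu(\mathbf q(\mathbf w)^*\mathbf x)\big]}{\|\mathbf w\|}\ge\frac{\theta}{20\sqrt{2\pi}},$$ where $\mathbf x\in\mathbb R^n$, $\mathbf x\sim_{i.i.d.}\mathrm{BG}(\theta)$.
   Context: $Z\sim\mathrm{BG}(\theta)$ means $Z=BG$ with $B\sim\mathrm{Ber}(\theta)$, $G\sim\mathcal N(0,1)$ independent; $\mathbf x\sim_{i.i.d.}\mathrm{BG}(\theta)$ means independent $\mathrm{BG}(\theta)$ coordinates. $h_\mu(z)=\mu\log\cosh(z/\mu)$. For $\mathbf w$ in the open unit ball of $\mathbb R^{n-1}$, $\mathbf q(\mathbf w)=(\mathbf w,\sqrt{1-\|\mathbf w\|^2})$. $\nabla_{\mathbf w}$ is the gradient with respect to $\mathbf w$. *)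

theory Defs
  imports "HOL-Probability.Probability"
begin

definition BG :: "real \<Rightarrow> real measure" where
  "BG \<theta> = distr (measure_pmf (bernoulli_pmf \<theta>) \<Otimes>\<^sub>M density lborel std_normal_density) borel
     (\<lambda>(b, g). (if b then 1 else 0) * g)"

text \<open>Law of x in R^n, n = CARD('m) + 1, with iid BG(theta) coordinates; x is split as
  (first n-1 coordinates, last coordinate).\<close>
definition BG_vec :: "real \<Rightarrow> (('m::finite \<Rightarrow> real) \<times> real) measure" where
  "BG_vec \<theta> = (PiM UNIV (\<lambda>_::'m. BG \<theta>)) \<Otimes>\<^sub>M BG \<theta>"

definition hmu :: "real \<Rightarrow> real \<Rightarrow> real" where
  "hmu \<mu> z = \<mu> * ln (cosh (z / \<mu>))"

text \<open>q(w)^* x for x = (x', x_n), q(w) = (w, sqrt(1 - |w|^2)).\<close>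
definition qdot :: "real ^ 'm \<Rightarrow> ('m::finite \<Rightarrow> real) \<times> real \<Rightarrow> real" where
  "qdot w x = (\<Sum>i\<in>UNIV. w $ i * fst x i) + sqrt (1 - (norm w)\<^sup>2) * snd x"

definition objective :: "real \<Rightarrow> real \<Rightarrow> real ^ 'm \<Rightarrow> real" where
  "objective \<theta> \<mu> w = (\<integral>x. hmu \<mu> (qdot w x) \<partial>(BG_vec \<theta> :: (('m::finite \<Rightarrow> real) \<times> real) measure))"

end

theory Submission
  imports Defs
begin

text \<open>
  Differentiating under the expectation (the derivative tanh (./mu) of hmu mu is 1/mu-Lipschitz,
  so the second order remainder is integrable) gives, with X = w^T x' and r = sqrt (1 - |w|^2),
  w^T grad f(w) = E [tanh (q(w)^T x / mu) * (X - |w|^2 / r * x_n)].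
  The x_n part is at most theta |w|^2 / r, because |tanh| <= 1 and E |x_n| <= theta.
  For the X part condition on x_n: with probability 1 - theta it is 0, which leaves
  E [tanh (X / mu) * X]; otherwise x_n is Gaussian and the contribution is nonnegative, since
  u \<mapsto> E [tanh ((u + r g) / mu)] is odd and nondecreasing.  Finally
  x tanh (x / mu) >= x^2 / m - x^4 / (3 m^3) for m = 4 sqrt 2 |w| >= mu, and the moments
  E X^2 = theta |w|^2, E X^4 <= 3 theta |w|^4 reduce the claim to a numerical inequality.
\<close>

section \<open>Elementary inequalities for tanh and hmu\<close>

lemma abs_tanh_le_1: "\<bar>tanh (x::real)\<bar> \<le> 1"
  using tanh_real_bounds[of x] by auto

lemma abs_tanh_diff_le: "\<bar>tanh a - tanh b\<bar> \<le> \<bar>a - (b::real)\<bar>"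
proof -
  have "norm (tanh a - tanh b) \<le> 1 * norm (a - b)"
  proof (rule field_differentiable_bound[of UNIV])
    fix z :: real
    show "(tanh has_field_derivative 1 - tanh z ^ 2) (at z within UNIV)"
      by (auto intro!: derivative_eq_intros)
    have "tanh z ^ 2 \<le> 1"
      using abs_tanh_le_1 abs_square_le_1 by blast
    then show "norm (1 - tanh z ^ 2) \<le> 1"
      by (simp add: abs_le_iff)
  qed auto
  then show ?thesis by simp
qed

lemma tanh_le_self: "0 \<le> y \<Longrightarrow> tanh y \<le> (y::real)"
  using abs_tanh_diff_le[of y 0] by simp

lemma tanh_ge_cubic: "0 \<le> y \<Longrightarrow> y - y^3/3 \<le> tanh (y::real)"
proof -
  assume y: "0 \<le> y"
  have "(\<lambda>x. tanh x - x + x^3/3) 0 \<le> (\<lambda>x. tanh x - x + x^3/3) y"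
  proof (rule DERIV_nonneg_imp_nondecreasing[OF y])
    fix x :: real assume x: "0 \<le> x" "x \<le> y"
    have "tanh x ^ 2 \<le> x ^ 2"
      using tanh_le_self[OF x(1)] x(1) by (intro power_mono) auto
    then show "\<exists>d. ((\<lambda>x. tanh x - x + x^3/3) has_real_derivative d) (at x) \<and> 0 \<le> d"
      by (intro exI[of _ "(1 - tanh x ^ 2) - 1 + x^2"]) (auto intro!: derivative_eq_intros)
  qed
  then show ?thesis by simp
qed

lemma x_mult_tanh_ge_quartic:
  fixes x \<mu> m :: real
  assumes "0 < \<mu>" "\<mu> \<le> m"
  shows "x^2 / m - x^4 / (3 * m^3) \<le> x * tanh (x / \<mu>)"
proof -
  have m: "0 < m" using assms by linarith
  have "\<bar>x\<bar> * (\<bar>x\<bar>/m - (\<bar>x\<bar>/m)^3/3) \<le> \<bar>x\<bar> * tanh (\<bar>x\<bar>/m)"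
    using m by (intro mult_left_mono tanh_ge_cubic) auto
  also have "\<dots> \<le> \<bar>x\<bar> * tanh (\<bar>x\<bar>/\<mu>)"
    using assms m by (intro mult_left_mono) (auto simp: frac_le)
  also have "\<dots> = x * tanh (x/\<mu>)"
    by (cases "x \<ge> 0") (auto simp: abs_if)
  finally show ?thesis
    using m by (simp add: field_simps power2_eq_square power4_eq_xxxx power3_eq_cube)
qed

lemma hmu_has_real_derivative: "0 < \<mu> \<Longrightarrow> (hmu \<mu> has_real_derivative tanh (z / \<mu>)) (at z)"
  unfolding hmu_def[abs_def]
  by (auto intro!: derivative_eq_intros simp: tanh_def field_simps)

lemma hmu_linearization_error:
  assumes "0 < \<mu>"
  shows "\<bar>hmu \<mu> b - hmu \<mu> a - tanh (a/\<mu>) * (b - a)\<bar> \<le> (b - a)^2 / \<mu>"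
proof -
  let ?f = "\<lambda>z. hmu \<mu> z - tanh (a/\<mu>) * z"
  have "norm (?f b - ?f a) \<le> (\<bar>b - a\<bar> / \<mu>) * norm (b - a)"
  proof (rule field_differentiable_bound[of "closed_segment a b"])
    fix z assume z: "z \<in> closed_segment a b"
    have "(?f has_field_derivative tanh (z/\<mu>) - tanh (a/\<mu>)) (at z)"
      by (auto intro!: derivative_eq_intros hmu_has_real_derivative[OF assms])
    then show "(?f has_field_derivative tanh (z/\<mu>) - tanh (a/\<mu>)) (at z within closed_segment a b)"
      by (rule has_field_derivative_at_within)
    have "\<bar>z - a\<bar> \<le> \<bar>b - a\<bar>"
      using z by (auto simp: closed_segment_eq_real_ivl split: if_splits)
    then have "\<bar>z/\<mu> - a/\<mu>\<bar> \<le> \<bar>b - a\<bar> / \<mu>"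
      using assms by (simp add: diff_divide_distrib[symmetric] divide_right_mono)
    then show "norm (tanh (z/\<mu>) - tanh (a/\<mu>)) \<le> \<bar>b - a\<bar> / \<mu>"
      using abs_tanh_diff_le[of "z/\<mu>" "a/\<mu>"] by simp
  qed auto
  then show ?thesis by (simp add: algebra_simps power2_eq_square abs_mult_self_eq)
qed

lemma abs_hmu_le:
  assumes "0 < \<mu>"
  shows "\<bar>hmu \<mu> z\<bar> \<le> \<bar>z\<bar>"
proof -
  have "cosh (z/\<mu>) \<le> exp \<bar>z/\<mu>\<bar>"
    unfolding cosh_def by (cases "z \<ge> 0") (auto simp: abs_if)
  then have "ln (cosh (z/\<mu>)) \<le> \<bar>z/\<mu>\<bar>"
    by (metis cosh_real_pos ln_exp ln_le_cancel_iff exp_gt_zero)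
  moreover have "0 \<le> ln (cosh (z/\<mu>))"
    using cosh_real_ge_1[of "z/\<mu>"] by simp
  ultimately have "0 \<le> hmu \<mu> z" "hmu \<mu> z \<le> \<mu> * \<bar>z/\<mu>\<bar>"
    using assms unfolding hmu_def by (simp, intro mult_left_mono) auto
  then show ?thesis
    using assms by (simp add: abs_div)
qed

lemma hmu_measurable [measurable]: "hmu \<mu> \<in> borel_measurable borel"
  unfolding hmu_def[abs_def] divide_inverse
  by (intro borel_measurable_continuous_onI continuous_intros) auto

lemma tanh_measurable [measurable]: "(tanh :: real \<Rightarrow> real) \<in> borel_measurable borel"
  by (intro borel_measurable_continuous_onI continuous_intros) auto

section \<open>Standard normal and Bernoulli-Gaussian laws\<close>

abbreviation std_normal :: "real measure" where
  "std_normal \<equiv> density lborel std_normal_density"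

lemma prob_space_std_normal: "prob_space std_normal"
  by (rule prob_space_normal_density) simp

lemma integrable_std_normal_iff:
  "f \<in> borel_measurable borel \<Longrightarrow>
    integrable std_normal f \<longleftrightarrow> integrable lborel (\<lambda>x. std_normal_density x * f x)"
  by (subst integrable_density) auto

lemma integral_std_normal:
  "f \<in> borel_measurable borel \<Longrightarrow>
    integral\<^sup>L std_normal f = (\<integral>x. std_normal_density x * f x \<partial>lborel)"
  by (subst integral_density) auto

lemma integrable_std_normal_power: "integrable std_normal (\<lambda>x. x ^ k)"
  using integrable_std_normal_moment[of k] by (subst integrable_std_normal_iff) auto

lemma integrable_std_normal_abs: "integrable std_normal (\<lambda>x. \<bar>x\<bar>)"
  using integrable_std_normal_moment_abs[of 1] by (subst integrable_std_normal_iff) auto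

lemma std_normal_moments:
  "integral\<^sup>L std_normal (\<lambda>x. x) = 0"
  "integral\<^sup>L std_normal (\<lambda>x. x^2) = 1"
  "integral\<^sup>L std_normal (\<lambda>x. x^3) = 0"
  "integral\<^sup>L std_normal (\<lambda>x. x^4) = 3"
  "integral\<^sup>L std_normal (\<lambda>x. \<bar>x\<bar>) = sqrt (2/pi)"
proof -
  show "integral\<^sup>L std_normal (\<lambda>x. x) = 0"
    using integral_std_normal_moment_odd[of 0] by (subst integral_std_normal) auto
  show "integral\<^sup>L std_normal (\<lambda>x. x^2) = 1"
    using integral_std_normal_moment_even[of 1] by (subst integral_std_normal) auto
  show "integral\<^sup>L std_normal (\<lambda>x. x^3) = 0"
    using integral_std_normal_moment_odd[of 1]
    by (subst integral_std_normal) (auto simp: numeral_3_eq_3)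
  have "integral\<^sup>L std_normal (\<lambda>x. x^4) = fact (2*2) / (2^2 * fact 2)"
    using integral_std_normal_moment_even[of 2] by (subst integral_std_normal) auto
  then show "integral\<^sup>L std_normal (\<lambda>x. x^4) = 3"
    by (simp add: fact_numeral)
  show "integral\<^sup>L std_normal (\<lambda>x. \<bar>x\<bar>) = sqrt (2/pi)"
    using integral_std_normal_moment_abs_odd[of 0] by (subst integral_std_normal) auto
qed

lemma integral_std_normal_reflect:
  fixes f :: "real \<Rightarrow> real"
  assumes [measurable]: "f \<in> borel_measurable borel"
  shows "integral\<^sup>L std_normal (\<lambda>g. f (- g)) = integral\<^sup>L std_normal f"
proof -
  have "integral\<^sup>L std_normal (\<lambda>g. f (- g)) = (\<integral>x. std_normal_density x * f (- x) \<partial>lborel)"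
    by (rule integral_std_normal) measurable
  also have "\<dots> = (\<integral>x. std_normal_density (0 + (-1) * x) * f (- (0 + (-1) * x)) \<partial>lborel)"
    using lborel_integral_real_affine[of "-1" "\<lambda>x. std_normal_density x * f (- x)" 0] by simp
  also have "\<dots> = (\<integral>x. std_normal_density x * f x \<partial>lborel)"
    by (simp add: std_normal_density_def)
  also have "\<dots> = integral\<^sup>L std_normal f"
    by (rule integral_std_normal[symmetric]) measurable
  finally show ?thesis .
qed

lemma prob_space_BG: "0 \<le> \<theta> \<Longrightarrow> \<theta> \<le> 1 \<Longrightarrow> prob_space (BG \<theta>)"
proof -
  assume "0 \<le> \<theta>" "\<theta> \<le> 1"
  interpret N: prob_space std_normal by (rule prob_space_std_normal)
  interpret B: prob_space "measure_pmf (bernoulli_pmf \<theta>)" by (rule prob_space_measure_pmf)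
  interpret pair_prob_space "measure_pmf (bernoulli_pmf \<theta>)" std_normal ..
  show ?thesis unfolding BG_def by (intro prob_space_distr) auto
qed

lemma sets_BG [simp, measurable_cong]: "sets (BG \<theta>) = sets borel"
  by (simp add: BG_def)

lemma BG_integral:
  fixes f :: "real \<Rightarrow> real"
  assumes \<theta>: "0 \<le> \<theta>" "\<theta> \<le> 1" and [measurable]: "f \<in> borel_measurable borel"
    and f: "integrable std_normal f"
  shows "integrable (BG \<theta>) f"
    and "integral\<^sup>L (BG \<theta>) f = (1 - \<theta>) * f 0 + \<theta> * integral\<^sup>L std_normal f"
proof -
  let ?B = "measure_pmf (bernoulli_pmf \<theta>)"
  let ?T = "\<lambda>(b, g). (if b then 1 else 0) * (g::real)"
  interpret N: prob_space std_normal by (rule prob_space_std_normal)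
  interpret B: prob_space ?B by (rule prob_space_measure_pmf)
  interpret P: pair_prob_space ?B std_normal ..
  have int: "integrable (?B \<Otimes>\<^sub>M std_normal) (\<lambda>x. f (?T x))"
  proof (rule P.Fubini_integrable)
    show "AE b in ?B. integrable std_normal (\<lambda>g. f (?T (b, g)))"
      using f by (auto simp: if_distrib)
  qed (auto intro: integrable_measure_pmf_finite)
  then show "integrable (BG \<theta>) f"
    unfolding BG_def by (subst integrable_distr_eq) auto
  have "integral\<^sup>L (BG \<theta>) f = integral\<^sup>L (?B \<Otimes>\<^sub>M std_normal) (\<lambda>x. f (?T x))"
    unfolding BG_def by (subst integral_distr) auto
  also have "\<dots> = (\<integral>b. (\<integral>g. f (?T (b, g)) \<partial>std_normal) \<partial>?B)"
    by (rule P.integral_fst'[OF int, symmetric])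
  also have "\<dots> = (\<Sum>b\<in>UNIV. (\<integral>g. f (?T (b, g)) \<partial>std_normal) * pmf (bernoulli_pmf \<theta>) b)"
    by (rule integral_measure_pmf_real) auto
  also have "\<dots> = (1 - \<theta>) * f 0 + \<theta> * integral\<^sup>L std_normal f"
    using \<theta> N.prob_space by (simp add: UNIV_bool)
  finally show "integral\<^sup>L (BG \<theta>) f = (1 - \<theta>) * f 0 + \<theta> * integral\<^sup>L std_normal f" .
qed

lemma BG_moments:
  assumes \<theta>: "0 \<le> \<theta>" "\<theta> \<le> 1"
  shows "integrable (BG \<theta>) (\<lambda>x. x ^ k)"
    and "integrable (BG \<theta>) (\<lambda>x. \<bar>x\<bar>)"
    and "integral\<^sup>L (BG \<theta>) (\<lambda>x. x) = 0"
    and "integral\<^sup>L (BG \<theta>) (\<lambda>x. x^2) = \<theta>"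
    and "integral\<^sup>L (BG \<theta>) (\<lambda>x. x^3) = 0"
    and "integral\<^sup>L (BG \<theta>) (\<lambda>x. x^4) = 3 * \<theta>"
    and "integral\<^sup>L (BG \<theta>) (\<lambda>x. \<bar>x\<bar>) \<le> \<theta>"
proof -
  note power = BG_integral[OF \<theta> _ integrable_std_normal_power]
  note abs = BG_integral[OF \<theta> _ integrable_std_normal_abs]
  show "integrable (BG \<theta>) (\<lambda>x. x ^ k)" "integrable (BG \<theta>) (\<lambda>x. \<bar>x\<bar>)"
    by (auto intro: power abs)
  show "integral\<^sup>L (BG \<theta>) (\<lambda>x. x) = 0"
    using power(2)[of 1] std_normal_moments by simp
  show "integral\<^sup>L (BG \<theta>) (\<lambda>x. x^2) = \<theta>"
    using power(2)[of 2] std_normal_moments by simp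
  show "integral\<^sup>L (BG \<theta>) (\<lambda>x. x^3) = 0"
    using power(2)[of 3] std_normal_moments by simp
  show "integral\<^sup>L (BG \<theta>) (\<lambda>x. x^4) = 3 * \<theta>"
    using power(2)[of 4] std_normal_moments by simp
  have "sqrt (2/pi) \<le> 1"
    using pi_gt3 by (simp add: real_sqrt_le_1_iff)
  then show "integral\<^sup>L (BG \<theta>) (\<lambda>x. \<bar>x\<bar>) \<le> \<theta>"
    using abs(2) std_normal_moments \<theta> by (simp add: mult_left_le)
qed

lemma (in prob_space) moments_indep_add:
  fixes A S :: "'a \<Rightarrow> real" and \<theta> a s :: real
  assumes ind: "indep_var borel A borel S"
    and iA: "\<And>p. integrable M (\<lambda>x. A x ^ p)" and iS: "\<And>q. integrable M (\<lambda>x. S x ^ q)"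
    and A: "expectation A = 0" "expectation (\<lambda>x. A x ^ 2) = \<theta> * a"
      "expectation (\<lambda>x. A x ^ 3) = 0" "expectation (\<lambda>x. A x ^ 4) = 3 * \<theta> * a^2"
    and S: "expectation S = 0" "expectation (\<lambda>x. S x ^ 2) = \<theta> * s"
      "expectation (\<lambda>x. S x ^ 3) = 0" "expectation (\<lambda>x. S x ^ 4) \<le> 3 * \<theta> * s^2"
    and \<theta>: "0 \<le> \<theta>" "\<theta> \<le> 1" and "0 \<le> a" "0 \<le> s"
  shows "integrable M (\<lambda>x. (A x + S x) ^ k)"
    and "expectation (\<lambda>x. A x + S x) = 0"
    and "expectation (\<lambda>x. (A x + S x) ^ 2) = \<theta> * (a + s)"
    and "expectation (\<lambda>x. (A x + S x) ^ 3) = 0"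
    and "expectation (\<lambda>x. (A x + S x) ^ 4) \<le> 3 * \<theta> * (a + s)^2"
proof -
  have ind_pow: "indep_var borel (\<lambda>x. A x ^ p) borel (\<lambda>x. S x ^ q)" for p q
    using indep_var_compose[OF ind, of "\<lambda>y. y ^ p" borel "\<lambda>y. y ^ q" borel]
    by (simp add: comp_def)
  have binomial: "(\<lambda>x. (A x + S x) ^ k) =
      (\<lambda>x. \<Sum>p\<le>k. of_nat (k choose p) * (A x ^ p * S x ^ (k - p)))" for k
    by (simp add: binomial_ring mult.assoc)
  show "integrable M (\<lambda>x. (A x + S x) ^ k)"
    unfolding binomial using indep_var_integrable[OF ind_pow iA iS] by auto
  have E: "expectation (\<lambda>x. (A x + S x) ^ k) = (\<Sum>p\<le>k. of_nat (k choose p) *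
      (expectation (\<lambda>x. A x ^ p) * expectation (\<lambda>x. S x ^ (k - p))))" for k
    unfolding binomial
    using indep_var_integrable[OF ind_pow iA iS] indep_var_lebesgue_integral[OF ind_pow iA iS]
    by (simp add: integral_sum)
  note moments = A S prob_space
  show "expectation (\<lambda>x. A x + S x) = 0"
    using E[of 1] moments by simp
  show "expectation (\<lambda>x. (A x + S x) ^ 2) = \<theta> * (a + s)"
    using E[of 2] moments by (simp add: numeral_2_eq_2 algebra_simps)
  show "expectation (\<lambda>x. (A x + S x) ^ 3) = 0"
    using E[of 3] moments by (simp add: numeral_3_eq_3)
  have "expectation (\<lambda>x. (A x + S x) ^ 4) =
      3 * \<theta> * a^2 + 6 * (\<theta> * a) * (\<theta> * s) + expectation (\<lambda>x. S x ^ 4)"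
    using E[of 4] moments by (simp add: eval_nat_numeral atMost_Suc binomial_fact fact_numeral)
  also have "\<dots> \<le> 3 * \<theta> * a^2 + 6 * (\<theta> * a) * s + 3 * \<theta> * s^2"
  proof -
    have "6 * (\<theta> * a) * (\<theta> * s) \<le> 6 * (\<theta> * a) * s"
      using \<open>0 \<le> a\<close> \<open>0 \<le> s\<close> \<theta> by (intro mult_left_mono mult_left_le_one_le) auto
    then show ?thesis
      using S(4) by linarith
  qed
  also have "\<dots> = 3 * \<theta> * (a + s)^2"
    by (simp add: power2_eq_square algebra_simps)
  finally show "expectation (\<lambda>x. (A x + S x) ^ 4) \<le> 3 * \<theta> * (a + s)^2" .
qed

abbreviation BG_prod :: "real \<Rightarrow> ('m::finite \<Rightarrow> real) measure" where
  "BG_prod \<theta> \<equiv> PiM UNIV (\<lambda>_. BG \<theta>)"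

lemma prob_space_BG_prod:
  "0 \<le> \<theta> \<Longrightarrow> \<theta> \<le> 1 \<Longrightarrow> prob_space (BG_prod \<theta> :: ('m::finite \<Rightarrow> real) measure)"
  by (intro prob_space_PiM prob_space_BG) auto

lemma sets_BG_prod [measurable_cong]:
  "sets (BG_prod \<theta> :: ('m::finite \<Rightarrow> real) measure) = sets (PiM UNIV (\<lambda>_::'m. borel))"
  by (intro sets_PiM_cong) auto

lemma distr_BG_prod_coordinate:
  "0 \<le> \<theta> \<Longrightarrow> \<theta> \<le> 1 \<Longrightarrow>
    distr (BG_prod \<theta> :: ('m::finite \<Rightarrow> real) measure) (BG \<theta>) (\<lambda>x. x i) = BG \<theta>"
  by (rule distr_PiM_component) (auto intro: prob_space_BG)

lemma BG_prod_coordinate_integral: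
  fixes f :: "real \<Rightarrow> real"
  assumes \<theta>: "0 \<le> \<theta>" "\<theta> \<le> 1" and [measurable]: "f \<in> borel_measurable borel"
  shows "integrable (BG_prod \<theta> :: ('m::finite \<Rightarrow> real) measure) (\<lambda>x. f (x i))
      \<longleftrightarrow> integrable (BG \<theta>) f"
    and "integral\<^sup>L (BG_prod \<theta> :: ('m::finite \<Rightarrow> real) measure) (\<lambda>x. f (x i))
      = integral\<^sup>L (BG \<theta>) f"
  using integrable_distr_eq[of "\<lambda>x. x i" "BG_prod \<theta> :: ('m \<Rightarrow> real) measure" "BG \<theta>" f]
    integral_distr[of "\<lambda>x. x i" "BG_prod \<theta> :: ('m \<Rightarrow> real) measure" "BG \<theta>" f]
  by (simp_all add: distr_BG_prod_coordinate[OF \<theta>])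

lemma indep_vars_BG_prod:
  assumes \<theta>: "0 \<le> \<theta>" "\<theta> \<le> 1"
  shows "prob_space.indep_vars (BG_prod \<theta> :: ('m::finite \<Rightarrow> real) measure)
    (\<lambda>_. borel) (\<lambda>i x. x i) UNIV"
proof -
  interpret prob_space "BG_prod \<theta> :: ('m \<Rightarrow> real) measure"
    by (rule prob_space_BG_prod[OF \<theta>])
  have "distr (BG_prod \<theta>) (PiM UNIV (\<lambda>_::'m. borel)) (\<lambda>x. \<lambda>i\<in>UNIV. x i)
      = distr (BG_prod \<theta>) (PiM UNIV (\<lambda>_::'m. borel)) (\<lambda>x. x)"
    by (intro distr_cong) (auto simp: restrict_def)
  also have "\<dots> = BG_prod \<theta>"
    by (rule distr_id2) (simp add: sets_BG_prod)
  also have "\<dots> = PiM UNIV (\<lambda>i::'m. distr (BG_prod \<theta>) borel (\<lambda>x. x i))"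
  proof (intro PiM_cong refl)
    fix i :: 'm
    have "distr (BG_prod \<theta>) borel (\<lambda>x. x i) = distr (BG_prod \<theta>) (BG \<theta>) (\<lambda>x. x i)"
      by (rule distr_cong) auto
    also have "\<dots> = BG \<theta>"
      by (rule distr_BG_prod_coordinate[OF \<theta>])
    finally show "BG \<theta> = distr (BG_prod \<theta>) borel (\<lambda>x. x i)" ..
  qed
  finally show ?thesis
    by (subst indep_vars_iff_distr_eq_PiM) auto
qed

lemma BG_prod_linear_form_moments:
  fixes w :: "'m::finite \<Rightarrow> real"
  assumes \<theta>: "0 \<le> \<theta>" "\<theta> \<le> 1"
  shows "(\<forall>k. integrable (BG_prod \<theta>) (\<lambda>x::'m \<Rightarrow> real. (\<Sum>i\<in>F. w i * x i) ^ k)) \<and>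
     (\<integral>x. (\<Sum>i\<in>F. w i * x i) \<partial>BG_prod \<theta>) = 0 \<and>
     (\<integral>x. (\<Sum>i\<in>F. w i * x i)^2 \<partial>BG_prod \<theta>) = \<theta> * (\<Sum>i\<in>F. (w i)^2) \<and>
     (\<integral>x. (\<Sum>i\<in>F. w i * x i)^3 \<partial>BG_prod \<theta>) = 0 \<and>
     (\<integral>x. (\<Sum>i\<in>F. w i * x i)^4 \<partial>BG_prod \<theta>) \<le> 3 * \<theta> * (\<Sum>i\<in>F. (w i)^2)^2"
  using finite[of F]
proof (induction F rule: finite_induct)
  case empty
  interpret prob_space "BG_prod \<theta> :: ('m \<Rightarrow> real) measure"
    by (rule prob_space_BG_prod[OF \<theta>])
  show ?case by (auto simp: power_0_left)
next
  case (insert j F)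
  interpret prob_space "BG_prod \<theta> :: ('m \<Rightarrow> real) measure"
    by (rule prob_space_BG_prod[OF \<theta>])
  have ind: "indep_vars (\<lambda>_. borel) (\<lambda>i (x::'m \<Rightarrow> real). w i * x i) UNIV"
    by (rule indep_vars_compose2[OF indep_vars_BG_prod[OF \<theta>], where Y="\<lambda>i y. w i * y"]) auto
  have ind_add: "indep_var borel (\<lambda>x. w j * x j) borel (\<lambda>x. \<Sum>i\<in>F. w i * x i)"
    using indep_vars_sum[OF insert(1,2) indep_vars_subset[OF ind]] by auto
  have coordinate_moment: "(\<integral>x. (w j * x j) ^ p \<partial>BG_prod \<theta>) = w j ^ p * (\<integral>y. y ^ p \<partial>BG \<theta>)"
      "integrable (BG_prod \<theta>) (\<lambda>x::'m \<Rightarrow> real. (w j * x j) ^ p)" for p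
    using BG_prod_coordinate_integral[OF \<theta>, of "\<lambda>y. (w j * y)^p" j] BG_moments(1)[OF \<theta>, of p]
    by (simp_all add: power_mult_distrib)
  let ?S = "\<lambda>x::'m \<Rightarrow> real. \<Sum>i\<in>F. w i * x i"
  have A: "expectation (\<lambda>x. w j * x j) = 0"
      "expectation (\<lambda>x. (w j * x j) ^ 2) = \<theta> * (w j)^2"
      "expectation (\<lambda>x. (w j * x j) ^ 3) = 0"
      "expectation (\<lambda>x. (w j * x j) ^ 4) = 3 * \<theta> * ((w j)^2)^2"
    using coordinate_moment(1)[of 1] coordinate_moment(1)[of 2] coordinate_moment(1)[of 3]
      coordinate_moment(1)[of 4] BG_moments(3-6)[OF \<theta>]
    by (simp_all add: power_mult[symmetric] mult_ac)
  have S: "\<And>k. integrable (BG_prod \<theta>) (\<lambda>x. ?S x ^ k)" "expectation ?S = 0"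
      "expectation (\<lambda>x. ?S x ^ 2) = \<theta> * (\<Sum>i\<in>F. (w i)^2)" "expectation (\<lambda>x. ?S x ^ 3) = 0"
      "expectation (\<lambda>x. ?S x ^ 4) \<le> 3 * \<theta> * (\<Sum>i\<in>F. (w i)^2)^2"
    using insert.IH by auto
  have "0 \<le> (\<Sum>i\<in>F. (w i)^2)"
    by (simp add: sum_nonneg)
  note moments = moments_indep_add[OF ind_add coordinate_moment(2) S(1) A S(2-) \<theta>
      zero_le_power2 this]
  show ?case
    unfolding sum.insert[OF insert(1,2)] using moments by blast
qed

lemma (in prob_space) distr_pair_snd:
  assumes "sigma_finite_measure N"
  shows "distr (M \<Otimes>\<^sub>M N) N snd = N"
proof -
  interpret N: sigma_finite_measure N by fact
  interpret pair_sigma_finite M N ..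
  have "distr (M \<Otimes>\<^sub>M N) N snd = distr (distr (N \<Otimes>\<^sub>M M) (M \<Otimes>\<^sub>M N) (\<lambda>(x, y). (y, x))) N snd"
    by (simp add: distr_pair_swap[symmetric])
  also have "\<dots> = distr (N \<Otimes>\<^sub>M M) N fst"
    by (subst distr_distr) (auto intro!: distr_cong)
  also have "\<dots> = N"
    by (rule distr_pair_fst)
  finally show ?thesis .
qed

lemma sets_BG_vec [measurable_cong]:
  "sets (BG_vec \<theta> :: (('m::finite \<Rightarrow> real) \<times> real) measure)
    = sets (PiM UNIV (\<lambda>_::'m. borel) \<Otimes>\<^sub>M borel)"
  unfolding BG_vec_def by (intro sets_pair_measure_cong sets_BG_prod) auto

lemma BG_vec_fst_integral:
  fixes f :: "('m::finite \<Rightarrow> real) \<Rightarrow> real"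
  assumes \<theta>: "0 \<le> \<theta>" "\<theta> \<le> 1" and [measurable]: "f \<in> borel_measurable (PiM UNIV (\<lambda>_. borel))"
  shows "integrable (BG_vec \<theta>) (\<lambda>x. f (fst x)) \<longleftrightarrow> integrable (BG_prod \<theta>) f"
    and "integral\<^sup>L (BG_vec \<theta>) (\<lambda>x. f (fst x)) = integral\<^sup>L (BG_prod \<theta>) f"
proof -
  interpret B: prob_space "BG \<theta>" by (rule prob_space_BG[OF \<theta>])
  have e: "BG_prod \<theta> = distr (BG_vec \<theta>) (BG_prod \<theta>) fst"
    unfolding BG_vec_def by (rule B.distr_pair_fst[symmetric])
  show "integrable (BG_vec \<theta>) (\<lambda>x. f (fst x)) \<longleftrightarrow> integrable (BG_prod \<theta>) f"
    by (subst e) (simp add: integrable_distr_eq BG_vec_def)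
  show "integral\<^sup>L (BG_vec \<theta>) (\<lambda>x. f (fst x)) = integral\<^sup>L (BG_prod \<theta>) f"
    by (subst e) (simp add: integral_distr BG_vec_def)
qed

lemma BG_vec_snd_integral:
  fixes f :: "real \<Rightarrow> real"
  assumes \<theta>: "0 \<le> \<theta>" "\<theta> \<le> 1" and [measurable]: "f \<in> borel_measurable borel"
  shows "integrable (BG_vec \<theta> :: (('m::finite \<Rightarrow> real) \<times> real) measure) (\<lambda>x. f (snd x))
      \<longleftrightarrow> integrable (BG \<theta>) f"
    and "integral\<^sup>L (BG_vec \<theta> :: (('m::finite \<Rightarrow> real) \<times> real) measure) (\<lambda>x. f (snd x))
      = integral\<^sup>L (BG \<theta>) f"
proof -
  interpret P: prob_space "BG_prod \<theta> :: ('m \<Rightarrow> real) measure" by (rule prob_space_BG_prod[OF \<theta>])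
  interpret B: prob_space "BG \<theta>" by (rule prob_space_BG[OF \<theta>])
  have e: "BG \<theta> = distr (BG_vec \<theta> :: (('m \<Rightarrow> real) \<times> real) measure) (BG \<theta>) snd"
    unfolding BG_vec_def by (rule P.distr_pair_snd[symmetric]) unfold_locales
  show "integrable (BG_vec \<theta> :: (('m \<Rightarrow> real) \<times> real) measure) (\<lambda>x. f (snd x))
      \<longleftrightarrow> integrable (BG \<theta>) f"
    by (subst e) (simp add: integrable_distr_eq BG_vec_def)
  show "integral\<^sup>L (BG_vec \<theta> :: (('m \<Rightarrow> real) \<times> real) measure) (\<lambda>x. f (snd x))
      = integral\<^sup>L (BG \<theta>) f"
    by (subst e) (simp add: integral_distr BG_vec_def)
qed

lemma BG_vec_coordinate_moments:
  assumes \<theta>: "0 \<le> \<theta>" "\<theta> \<le> 1"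
  shows "integrable (BG_vec \<theta> :: (('m::finite \<Rightarrow> real) \<times> real) measure) (\<lambda>x. \<bar>snd x\<bar>)"
    and "integrable (BG_vec \<theta> :: (('m::finite \<Rightarrow> real) \<times> real) measure) (\<lambda>x. (snd x)^2)"
    and "integrable (BG_vec \<theta> :: (('m::finite \<Rightarrow> real) \<times> real) measure) (\<lambda>x. \<bar>fst x i\<bar>)"
    and "integrable (BG_vec \<theta> :: (('m::finite \<Rightarrow> real) \<times> real) measure) (\<lambda>x. (fst x i)^2)"
    and "integral\<^sup>L (BG_vec \<theta> :: (('m::finite \<Rightarrow> real) \<times> real) measure) (\<lambda>x. \<bar>snd x\<bar>) \<le> \<theta>"
proof -
  note snd = BG_vec_snd_integral[OF \<theta>, where 'm='m]
  note fst = BG_vec_fst_integral[OF \<theta>, where 'm='m]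
  note coordinate = BG_prod_coordinate_integral(1)[OF \<theta>, where 'm='m]
  show "integrable (BG_vec \<theta> :: (('m \<Rightarrow> real) \<times> real) measure) (\<lambda>x. \<bar>snd x\<bar>)"
    using snd(1)[of abs] BG_moments(2)[OF \<theta>] by simp
  show "integrable (BG_vec \<theta> :: (('m \<Rightarrow> real) \<times> real) measure) (\<lambda>x. (snd x)^2)"
    using snd(1)[of "\<lambda>y. y^2"] BG_moments(1)[OF \<theta>, of 2] by simp
  show "integrable (BG_vec \<theta> :: (('m \<Rightarrow> real) \<times> real) measure) (\<lambda>x. \<bar>fst x i\<bar>)"
    using fst(1)[of "\<lambda>x. \<bar>x i\<bar>"] coordinate[of abs i] BG_moments(2)[OF \<theta>] by simp
  show "integrable (BG_vec \<theta> :: (('m \<Rightarrow> real) \<times> real) measure) (\<lambda>x. (fst x i)^2)"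
    using fst(1)[of "\<lambda>x. (x i)^2"] coordinate[of "\<lambda>y. y^2" i] BG_moments(1)[OF \<theta>, of 2] by simp
  show "integral\<^sup>L (BG_vec \<theta> :: (('m \<Rightarrow> real) \<times> real) measure) (\<lambda>x. \<bar>snd x\<bar>) \<le> \<theta>"
    using snd(2)[of abs] BG_moments(7)[OF \<theta>] by simp
qed

lemma BG_vec_integrable_bounded_mult:
  fixes g :: "('m::finite \<Rightarrow> real) \<times> real \<Rightarrow> real"
  assumes \<theta>: "0 \<le> \<theta>" "\<theta> \<le> 1" and [measurable]: "g \<in> borel_measurable (BG_vec \<theta>)"
    and g: "\<And>x. \<bar>g x\<bar> \<le> 1"
  shows "integrable (BG_vec \<theta>) (\<lambda>x. g x * snd x)"
    and "integrable (BG_vec \<theta>) (\<lambda>x. g x * fst x i)"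
proof -
  have bound: "\<bar>g x * y\<bar> \<le> \<bar>y\<bar>" for x y
    using g[of x] by (simp add: abs_mult mult_left_le_one_le)
  show "integrable (BG_vec \<theta>) (\<lambda>x. g x * snd x)"
    by (rule Bochner_Integration.integrable_bound[OF BG_vec_coordinate_moments(1)[OF \<theta>]])
      (auto simp: bound)
  show "integrable (BG_vec \<theta>) (\<lambda>x. g x * fst x i)"
    by (rule Bochner_Integration.integrable_bound[OF BG_vec_coordinate_moments(3)[OF \<theta>, of i]])
      (auto simp: bound)
qed

section \<open>Differentiability of the objective\<close>

lemma has_derivative_sqrt_one_minus_norm_sq:
  fixes w :: "'a::real_inner"
  assumes "norm w < 1"
  shows "((\<lambda>v. sqrt (1 - (norm v)^2)) has_derivative
      (\<lambda>d. - (w \<bullet> d) / sqrt (1 - (norm w)^2))) (at w)"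
proof -
  have "0 < 1 - w \<bullet> w"
    using assms by (simp add: power2_norm_eq_inner[symmetric] abs_square_less_1)
  then have "((\<lambda>v. sqrt (1 - v \<bullet> v)) has_derivative (\<lambda>d. - (w \<bullet> d) / sqrt (1 - w \<bullet> w))) (at w)"
    by (auto intro!: derivative_eq_intros simp: inner_commute field_simps)
  then show ?thesis
    by (simp add: power2_norm_eq_inner)
qed

lemma sqrt_one_minus_norm_sq_lipschitz:
  fixes v w :: "'a::real_normed_vector"
  assumes w: "norm w < 1/2" and v: "norm v \<le> 1"
  shows "\<bar>sqrt (1 - (norm v)^2) - sqrt (1 - (norm w)^2)\<bar> \<le> 2 * norm (v - w)"
proof -
  define A where "A = 1 - (norm v)^2"
  define B where "B = 1 - (norm w)^2"
  have "0 \<le> A"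
    unfolding A_def using v by (simp add: abs_le_square_iff power_le_one)
  have "(norm w)^2 < (1/2)^2"
    using w by (intro power_strict_mono) auto
  then have "3/4 \<le> B"
    unfolding B_def by (simp add: power_divide)
  then have "3/4 \<le> sqrt B"
    by (intro real_le_rsqrt) (auto simp: power2_eq_square)
  then have sum_ge: "3/4 \<le> sqrt A + sqrt B"
    using \<open>0 \<le> A\<close> real_sqrt_ge_zero[of A] by linarith
  have "\<bar>sqrt A - sqrt B\<bar> * (3/4) \<le> \<bar>sqrt A - sqrt B\<bar> * (sqrt A + sqrt B)"
    using sum_ge by (intro mult_left_mono) auto
  also have "\<dots> = \<bar>(sqrt A - sqrt B) * (sqrt A + sqrt B)\<bar>"
    using sum_ge by (simp add: abs_mult)
  also have "(sqrt A - sqrt B) * (sqrt A + sqrt B) = A - B"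
    using \<open>0 \<le> A\<close> \<open>3/4 \<le> B\<close> by (simp add: algebra_simps)
  also have "A - B = (norm w - norm v) * (norm w + norm v)"
    unfolding A_def B_def by (simp add: power2_eq_square algebra_simps)
  also have "\<bar>(norm w - norm v) * (norm w + norm v)\<bar> = \<bar>norm w - norm v\<bar> * (norm w + norm v)"
    by (simp add: abs_mult)
  also have "\<dots> \<le> norm (v - w) * (3/2)"
    using w v norm_triangle_ineq3[of w v] by (intro mult_mono) (auto simp: norm_minus_commute)
  finally show ?thesis
    unfolding A_def B_def by simp
qed

lemma has_derivative_if_remainder_le:
  fixes f :: "'a::real_normed_vector \<Rightarrow> 'b::real_normed_vector"
  assumes D: "bounded_linear D"
    and e: "((\<lambda>v. e v / norm (v - w)) \<longlongrightarrow> 0) (at w)"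
    and bound: "eventually (\<lambda>v. norm (f v - f w - D (v - w)) \<le> C * (norm (v - w))^2 + e v) (at w)"
  shows "(f has_derivative D) (at w)"
proof -
  have "((\<lambda>v. norm (v - w)) \<longlongrightarrow> 0) (at w)"
    by (intro tendsto_eq_intros) auto
  from tendsto_add[OF tendsto_mult[OF tendsto_const this] e]
  have upper: "((\<lambda>v. C * norm (v - w) + e v / norm (v - w)) \<longlongrightarrow> 0) (at w)"
    by simp
  have "eventually (\<lambda>v. norm (f v - f w - D (v - w)) / norm (v - w)
      \<le> C * norm (v - w) + e v / norm (v - w)) (at w)"
    using bound eventually_neq_at_within[of w w UNIV]
  proof eventually_elim
    case (elim v)
    then have "0 < norm (v - w)" by simp
    have "norm (f v - f w - D (v - w)) / norm (v - w)
        \<le> (C * (norm (v - w))^2 + e v) / norm (v - w)"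
      using elim(1) by (rule divide_right_mono) simp
    also have "\<dots> = C * norm (v - w) + e v / norm (v - w)"
      using \<open>0 < norm (v - w)\<close> unfolding add_divide_distrib power2_eq_square by simp
    finally show ?case .
  qed
  then have "((\<lambda>v. norm (f v - f w - D (v - w)) / norm (v - w)) \<longlongrightarrow> 0) (at w)"
    by (intro real_tendsto_sandwich[OF _ _ tendsto_const upper]) (simp_all add: always_eventually)
  with D show ?thesis
    unfolding has_derivative_iff_norm by simp
qed

lemma hmu_perturbation_bound:
  fixes a b S D y c n Q \<mu> :: real
  assumes \<mu>: "0 < \<mu>" and b: "b = a + S + D * y" and D: "\<bar>D\<bar> \<le> 2 * n" and S: "S^2 \<le> n^2 * Q"
  shows "\<bar>hmu \<mu> b - hmu \<mu> a - tanh (a/\<mu>) * (S - c * y)\<bar>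
    \<le> n^2 * (2 * Q + 8 * y^2) / \<mu> + \<bar>D + c\<bar> * \<bar>y\<bar>"
proof -
  have "D^2 \<le> (2 * n)^2"
    using power_mono[OF D abs_ge_zero, of 2] by simp
  then have "(D * y)^2 \<le> (2 * n)^2 * y^2"
    unfolding power_mult_distrib by (rule mult_right_mono) simp
  moreover have "(b - a)^2 \<le> 2 * S^2 + 2 * (D * y)^2"
    using b sum_squares_bound[of S "D * y"] by (simp add: power2_sum)
  ultimately have "(b - a)^2 \<le> n^2 * (2 * Q + 8 * y^2)"
    using S by (simp add: power_mult_distrib algebra_simps)
  then have taylor: "\<bar>hmu \<mu> b - hmu \<mu> a - tanh (a/\<mu>) * (b - a)\<bar> \<le> n^2 * (2 * Q + 8 * y^2) / \<mu>"
    using hmu_linearization_error[OF \<mu>, of b a] \<mu> divide_right_mono[of _ _ \<mu>] by fastforce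
  have "\<bar>tanh (a/\<mu>) * (D + c) * y\<bar> \<le> \<bar>D + c\<bar> * \<bar>y\<bar>"
    using abs_tanh_le_1[of "a/\<mu>"] by (simp add: abs_mult mult_left_le_one_le mult.assoc)
  moreover have "hmu \<mu> b - hmu \<mu> a - tanh (a/\<mu>) * (S - c * y)
      = (hmu \<mu> b - hmu \<mu> a - tanh (a/\<mu>) * (b - a)) + tanh (a/\<mu>) * (D + c) * y"
    using b by (simp add: algebra_simps)
  ultimately show ?thesis
    using taylor by linarith
qed

lemma qdot_measurable [measurable]:
  "qdot v \<in> borel_measurable (BG_vec \<theta> :: (('m::finite \<Rightarrow> real) \<times> real) measure)"
  unfolding qdot_def[abs_def] by measurable

lemma hmu_qdot_remainder_le:
  fixes v w :: "real ^ 'm::finite"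
  assumes \<mu>: "0 < \<mu>" and w: "norm w < 1/2" and v: "norm v \<le> 1"
  defines "r \<equiv> \<lambda>v :: real ^ 'm. sqrt (1 - (norm v)^2)"
  shows "\<bar>hmu \<mu> (qdot v x) - hmu \<mu> (qdot w x) - tanh (qdot w x / \<mu>) *
        ((\<Sum>i\<in>UNIV. (v - w)$i * fst x i) - (w \<bullet> (v - w)) / r w * snd x)\<bar>
    \<le> (norm (v - w))^2 * ((2 * (\<Sum>i\<in>UNIV. (fst x i)^2) + 8 * (snd x)^2) / \<mu>)
      + \<bar>r v - r w + (w \<bullet> (v - w)) / r w\<bar> * \<bar>snd x\<bar>"
proof -
  have qdot_r: "qdot u x = (\<Sum>i\<in>UNIV. u$i * fst x i) + r u * snd x" for u
    unfolding qdot_def r_def ..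
  have "\<bar>hmu \<mu> (qdot v x) - hmu \<mu> (qdot w x) - tanh (qdot w x / \<mu>) *
        ((\<Sum>i\<in>UNIV. (v - w)$i * fst x i) - (w \<bullet> (v - w)) / r w * snd x)\<bar>
    \<le> (norm (v - w))^2 * (2 * (\<Sum>i\<in>UNIV. (fst x i)^2) + 8 * (snd x)^2) / \<mu>
      + \<bar>r v - r w + (w \<bullet> (v - w)) / r w\<bar> * \<bar>snd x\<bar>"
  proof (rule hmu_perturbation_bound[OF \<mu>])
    show "qdot v x = qdot w x + (\<Sum>i\<in>UNIV. (v - w)$i * fst x i) + (r v - r w) * snd x"
      unfolding qdot_r by (simp add: algebra_simps sum.distrib[symmetric])
    show "\<bar>r v - r w\<bar> \<le> 2 * norm (v - w)"
      unfolding r_def by (rule sqrt_one_minus_norm_sq_lipschitz[OF w v])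
    have "(norm (v - w))^2 = (\<Sum>i\<in>UNIV. ((v - w)$i)^2)"
      by (simp only: power2_norm_eq_inner inner_vec_def) (simp add: power2_eq_square)
    then show "(\<Sum>i\<in>UNIV. (v - w)$i * fst x i)^2 \<le> (norm (v - w))^2 * (\<Sum>i\<in>UNIV. (fst x i)^2)"
      by (simp add: Cauchy_Schwarz_ineq_sum)
  qed
  then show ?thesis
    by simp
qed

lemma integrable_hmu_qdot:
  fixes v :: "real ^ 'm::finite"
  assumes \<theta>: "0 \<le> \<theta>" "\<theta> \<le> 1" and \<mu>: "0 < \<mu>"
  shows "integrable (BG_vec \<theta>) (\<lambda>x. hmu \<mu> (qdot v x))"
proof (rule Bochner_Integration.integrable_bound)
  let ?r = "sqrt (1 - (norm v)^2)"
  show "integrable (BG_vec \<theta>) (\<lambda>x. (\<Sum>i\<in>UNIV. \<bar>v$i\<bar> * \<bar>fst x i\<bar>) + \<bar>?r\<bar> * \<bar>snd x\<bar>)"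
    using BG_vec_coordinate_moments(1,3)[OF \<theta>, where 'm='m]
    by (auto intro!: Bochner_Integration.integrable_add Bochner_Integration.integrable_sum)
  have "\<bar>hmu \<mu> (qdot v x)\<bar> \<le> (\<Sum>i\<in>UNIV. \<bar>v$i\<bar> * \<bar>fst x i\<bar>) + \<bar>?r\<bar> * \<bar>snd x\<bar>" for x
  proof -
    have "\<bar>hmu \<mu> (qdot v x)\<bar> \<le> \<bar>\<Sum>i\<in>UNIV. v$i * fst x i\<bar> + \<bar>?r * snd x\<bar>"
      using abs_hmu_le[OF \<mu>, of "qdot v x"] abs_triangle_ineq unfolding qdot_def
      by (rule order.trans)
    also have "\<bar>\<Sum>i\<in>UNIV. v$i * fst x i\<bar> \<le> (\<Sum>i\<in>UNIV. \<bar>v$i\<bar> * \<bar>fst x i\<bar>)"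
      by (rule order.trans[OF sum_abs]) (simp add: abs_mult)
    finally show ?thesis
      by (simp add: abs_mult)
  qed
  then show "AE x in BG_vec \<theta>. norm (hmu \<mu> (qdot v x))
      \<le> norm ((\<Sum>i\<in>UNIV. \<bar>v$i\<bar> * \<bar>fst x i\<bar>) + \<bar>?r\<bar> * \<bar>snd x\<bar>)"
    by (intro AE_I2) (smt (verit) real_norm_def)
qed measurable

text \<open>The second summand comes from differentiating the last coordinate sqrt (1 - |w|^2) of q(w).\<close>
definition objective_deriv :: "real \<Rightarrow> real \<Rightarrow> real ^ 'm \<Rightarrow> real ^ 'm \<Rightarrow> real" where
  "objective_deriv \<theta> \<mu> w d = (\<integral>x. tanh (qdot w x / \<mu>) *
      ((\<Sum>i\<in>UNIV. d$i * fst x i) - (w \<bullet> d) / sqrt (1 - (norm w)^2) * snd x)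
    \<partial>(BG_vec \<theta> :: (('m::finite \<Rightarrow> real) \<times> real) measure))"

lemma objective_deriv_integrand:
  fixes w d :: "real ^ 'm::finite" and \<mu> c :: real
  assumes \<theta>: "0 \<le> \<theta>" "\<theta> \<le> 1"
  defines "t \<equiv> \<lambda>x. tanh (qdot w x / \<mu>)"
  shows "integrable (BG_vec \<theta>) (\<lambda>x. t x * ((\<Sum>i\<in>UNIV. d$i * fst x i) - c * snd x))"
    and "(\<integral>x. t x * ((\<Sum>i\<in>UNIV. d$i * fst x i) - c * snd x) \<partial>BG_vec \<theta>)
      = (\<Sum>i\<in>UNIV. d$i * (\<integral>x. t x * fst x i \<partial>BG_vec \<theta>)) - c * (\<integral>x. t x * snd x \<partial>BG_vec \<theta>)"
proof -
  have t_measurable [measurable]: "t \<in> borel_measurable (BG_vec \<theta>)"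
    unfolding t_def by measurable
  have "\<bar>t x\<bar> \<le> 1" for x
    unfolding t_def by (rule abs_tanh_le_1)
  note integrable = BG_vec_integrable_bounded_mult[OF \<theta> t_measurable this]
  have split: "(\<lambda>x. t x * ((\<Sum>i\<in>UNIV. d$i * fst x i) - c * snd x))
      = (\<lambda>x. (\<Sum>i\<in>UNIV. d$i * (t x * fst x i)) - c * (t x * snd x))"
    by (auto simp: algebra_simps sum_distrib_left)
  show "integrable (BG_vec \<theta>) (\<lambda>x. t x * ((\<Sum>i\<in>UNIV. d$i * fst x i) - c * snd x))"
    unfolding split using integrable by auto
  show "(\<integral>x. t x * ((\<Sum>i\<in>UNIV. d$i * fst x i) - c * snd x) \<partial>BG_vec \<theta>)
      = (\<Sum>i\<in>UNIV. d$i * (\<integral>x. t x * fst x i \<partial>BG_vec \<theta>)) - c * (\<integral>x. t x * snd x \<partial>BG_vec \<theta>)"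
    unfolding split using integrable by (simp add: Bochner_Integration.integral_sum)
qed

lemma bounded_linear_objective_deriv:
  assumes "0 \<le> \<theta>" "\<theta> \<le> 1"
  shows "bounded_linear (objective_deriv \<theta> \<mu> (w :: real ^ 'm::finite))"
proof -
  let ?t = "\<lambda>x. tanh (qdot w x / \<mu>)"
  have "objective_deriv \<theta> \<mu> w = (\<lambda>d. (\<Sum>i\<in>UNIV. d$i * (\<integral>x. ?t x * fst x i \<partial>BG_vec \<theta>))
      - (w \<bullet> d) * ((\<integral>x. ?t x * snd x \<partial>BG_vec \<theta>) / sqrt (1 - (norm w)^2)))"
  proof
    fix d
    show "objective_deriv \<theta> \<mu> w d = (\<Sum>i\<in>UNIV. d$i * (\<integral>x. ?t x * fst x i \<partial>BG_vec \<theta>))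
      - (w \<bullet> d) * ((\<integral>x. ?t x * snd x \<partial>BG_vec \<theta>) / sqrt (1 - (norm w)^2))"
      unfolding objective_deriv_def
      using objective_deriv_integrand(2)[OF assms, where w=w and \<mu>=\<mu> and d=d
          and c="(w \<bullet> d) / sqrt (1 - (norm w)^2)"]
      by simp
  qed
  then show ?thesis
    by (simp only:) (intro bounded_linear_sub bounded_linear_sum bounded_linear_mult_const
        bounded_linear_vec_nth bounded_linear_inner_right)
qed

lemma objective_remainder_bound:
  fixes w :: "real ^ 'm::finite"
  assumes \<theta>: "0 \<le> \<theta>" "\<theta> \<le> 1" and \<mu>: "0 < \<mu>" and w: "norm w < 1/2"
  obtains C where "\<And>v. norm v \<le> 1 \<Longrightarrow>
    \<bar>objective \<theta> \<mu> v - objective \<theta> \<mu> w - objective_deriv \<theta> \<mu> w (v - w)\<bar>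
      \<le> C * (norm (v - w))^2 + \<bar>sqrt (1 - (norm v)^2) - sqrt (1 - (norm w)^2)
          + (w \<bullet> (v - w)) / sqrt (1 - (norm w)^2)\<bar>"
proof -
  let ?Q = "BG_vec \<theta> :: (('m \<Rightarrow> real) \<times> real) measure"
  define r where "r v = sqrt (1 - (norm v)^2)" for v :: "real ^ 'm"
  define t where "t x = tanh (qdot w x / \<mu>)" for x
  define K where "K x = (2 * (\<Sum>i\<in>UNIV. (fst x i)^2) + 8 * (snd x)^2) / \<mu>" for x :: "('m \<Rightarrow> real) \<times> real"
  have K_integrable: "integrable ?Q K"
    unfolding K_def using BG_vec_coordinate_moments[OF \<theta>, where 'm='m]
    by (intro integrable_divide Bochner_Integration.integrable_add integrable_mult_right
        Bochner_Integration.integrable_sum) auto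
  show ?thesis
  proof (rule that[of "integral\<^sup>L ?Q K"], fold r_def)
    fix v :: "real ^ 'm" assume v: "norm v \<le> 1"
    define n where "n = norm (v - w)"
    define e where "e = r v - r w + (w \<bullet> (v - w)) / r w"
    define L where "L x = (\<Sum>i\<in>UNIV. (v - w)$i * fst x i) - (w \<bullet> (v - w)) / r w * snd x" for x
    let ?I = "\<lambda>x. hmu \<mu> (qdot v x) - hmu \<mu> (qdot w x) - t x * L x"
    let ?B = "\<lambda>x. n^2 * K x + \<bar>e\<bar> * \<bar>snd x\<bar>"
    have pointwise: "\<bar>?I x\<bar> \<le> ?B x" for x
      using hmu_qdot_remainder_le[OF \<mu> w v, of x]
      unfolding t_def L_def K_def e_def n_def r_def by simp
    have B_integrable: "integrable ?Q ?B"
      using K_integrable BG_vec_coordinate_moments(1)[OF \<theta>, where 'm='m] by auto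
    have [measurable]: "t \<in> borel_measurable ?Q" "L \<in> borel_measurable ?Q"
      unfolding t_def L_def by measurable
    have I_integrable: "integrable ?Q ?I"
      by (rule Bochner_Integration.integrable_bound[OF B_integrable])
        (use pointwise in \<open>auto intro!: AE_I2 order.trans[OF _ abs_ge_self]\<close>)
    have "objective \<theta> \<mu> v - objective \<theta> \<mu> w - objective_deriv \<theta> \<mu> w (v - w) = (\<integral>x. ?I x \<partial>?Q)"
      using integrable_hmu_qdot[OF \<theta> \<mu>, of v] integrable_hmu_qdot[OF \<theta> \<mu>, of w]
        objective_deriv_integrand(1)[OF \<theta>, of w \<mu> "v - w" "(w \<bullet> (v - w)) / r w"]
      unfolding objective_def objective_deriv_def t_def L_def r_def by simp
    also have "\<bar>\<dots>\<bar> \<le> (\<integral>x. \<bar>?I x\<bar> \<partial>?Q)"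
      by (rule integral_abs_bound)
    also have "\<dots> \<le> (\<integral>x. ?B x \<partial>?Q)"
      using pointwise I_integrable B_integrable by (intro integral_mono) auto
    also have "\<dots> = n^2 * integral\<^sup>L ?Q K + \<bar>e\<bar> * (\<integral>x. \<bar>snd x\<bar> \<partial>?Q)"
      using K_integrable BG_vec_coordinate_moments(1)[OF \<theta>, where 'm='m] by simp
    also have "\<dots> \<le> n^2 * integral\<^sup>L ?Q K + \<bar>e\<bar>"
      using BG_vec_coordinate_moments(5)[OF \<theta>, where 'm='m] \<theta>
      by (simp add: mult_left_le)
    finally show "\<bar>objective \<theta> \<mu> v - objective \<theta> \<mu> w - objective_deriv \<theta> \<mu> w (v - w)\<bar>
        \<le> integral\<^sup>L ?Q K * (norm (v - w))^2 + \<bar>r v - r w + (w \<bullet> (v - w)) / r w\<bar>"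
      unfolding n_def e_def by (simp add: mult.commute)
  qed
qed

lemma has_derivative_objective:
  fixes w :: "real ^ 'm::finite"
  assumes \<theta>: "0 \<le> \<theta>" "\<theta> \<le> 1" and \<mu>: "0 < \<mu>" and w: "norm w < 1/2"
  shows "(objective \<theta> \<mu> has_derivative objective_deriv \<theta> \<mu> w) (at w)"
proof -
  define r where "r v = sqrt (1 - (norm v)^2)" for v :: "real ^ 'm"
  obtain C where C: "\<And>v. norm v \<le> 1 \<Longrightarrow>
      \<bar>objective \<theta> \<mu> v - objective \<theta> \<mu> w - objective_deriv \<theta> \<mu> w (v - w)\<bar>
        \<le> C * (norm (v - w))^2 + \<bar>r v - r w + (w \<bullet> (v - w)) / r w\<bar>"
    using objective_remainder_bound[OF assms] unfolding r_def by blast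
  have "(r has_derivative (\<lambda>d. - (w \<bullet> d) / r w)) (at w)"
    unfolding r_def using has_derivative_sqrt_one_minus_norm_sq[of w] w by simp
  then have r_remainder: "((\<lambda>v. \<bar>r v - r w + (w \<bullet> (v - w)) / r w\<bar> / norm (v - w)) \<longlongrightarrow> 0) (at w)"
    unfolding has_derivative_iff_norm by (simp add: diff_minus_eq_add)
  have "eventually (\<lambda>v. dist v w < 1/2) (at w)"
    by (rule eventually_at_ball'[of "1/2" w, THEN eventually_mono]) (auto simp: dist_commute)
  then have "eventually (\<lambda>v. \<bar>objective \<theta> \<mu> v - objective \<theta> \<mu> w - objective_deriv \<theta> \<mu> w (v - w)\<bar>
      \<le> C * (norm (v - w))^2 + \<bar>r v - r w + (w \<bullet> (v - w)) / r w\<bar>) (at w)"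
  proof eventually_elim
    case (elim v)
    then have "norm v \<le> 1"
      using w norm_triangle_sub[of v w] by (simp add: dist_norm)
    then show ?case by (rule C)
  qed
  then show ?thesis
    using has_derivative_if_remainder_le[OF bounded_linear_objective_deriv[OF \<theta>] r_remainder] by simp
qed

section \<open>Lower bound on the radial derivative\<close>

lemma integral_std_normal_tanh_shift_mult_nonneg:
  fixes X r \<mu> :: real
  assumes \<mu>: "0 < \<mu>"
  shows "0 \<le> (\<integral>g. tanh ((X + r * g) / \<mu>) * X \<partial>std_normal)"
proof -
  interpret N: prob_space std_normal by (rule prob_space_std_normal)
  define \<psi> where "\<psi> u = (\<integral>g. tanh ((u + r * g) / \<mu>) \<partial>std_normal)" for u
  have integrable: "integrable std_normal (\<lambda>g. tanh ((u + r * g) / \<mu>))" for u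
    by (rule Bochner_Integration.integrable_bound[of _ "\<lambda>_. 1::real"])
      (auto intro: abs_tanh_le_1)
  have odd: "\<psi> (- u) = - \<psi> u" for u
  proof -
    have "\<psi> (- u) = (\<integral>g. tanh ((- u + r * (- g)) / \<mu>) \<partial>std_normal)"
      unfolding \<psi>_def
      by (rule integral_std_normal_reflect[of "\<lambda>g. tanh ((- u + r * g) / \<mu>)", symmetric]) measurable
    also have "\<dots> = (\<integral>g. - tanh ((u + r * g) / \<mu>) \<partial>std_normal)"
      by (intro Bochner_Integration.integral_cong refl)
        (metis tanh_minus minus_divide_left minus_add_distrib mult_minus_right)
    also have "\<dots> = - \<psi> u"
      unfolding \<psi>_def by simp
    finally show ?thesis .
  qed
  have mono: "\<psi> u \<le> \<psi> v" if "u \<le> v" for u v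
    unfolding \<psi>_def using integrable[of u] integrable[of v] that \<mu>
    by (intro integral_mono) (auto simp: divide_right_mono)
  have "0 \<le> X * \<psi> X"
    using mono[of 0 X] mono[of X 0] odd[of 0] by (cases "0 \<le> X") (auto simp: mult_nonpos_nonpos)
  also have "X * \<psi> X = (\<integral>g. tanh ((X + r * g) / \<mu>) * X \<partial>std_normal)"
    unfolding \<psi>_def by (simp add: mult.commute)
  finally show ?thesis .
qed

lemma BG_integral_tanh_shift_mult_ge:
  fixes X r \<mu> :: real
  assumes \<theta>: "0 \<le> \<theta>" "\<theta> \<le> 1" and \<mu>: "0 < \<mu>"
  shows "(1 - \<theta>) * (tanh (X / \<mu>) * X) \<le> (\<integral>y. tanh ((X + r * y) / \<mu>) * X \<partial>BG \<theta>)"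
proof -
  interpret N: prob_space std_normal by (rule prob_space_std_normal)
  let ?g = "\<lambda>y. tanh ((X + r * y) / \<mu>) * X"
  have "integrable std_normal ?g"
    by (rule Bochner_Integration.integrable_bound[of _ "\<lambda>_. \<bar>X\<bar>"])
      (auto simp: abs_mult intro!: mult_left_le_one_le abs_tanh_le_1)
  then have "integral\<^sup>L (BG \<theta>) ?g = (1 - \<theta>) * ?g 0 + \<theta> * integral\<^sup>L std_normal ?g"
    by (intro BG_integral(2)[OF \<theta>]) auto
  moreover have "0 \<le> \<theta> * integral\<^sup>L std_normal ?g"
    using integral_std_normal_tanh_shift_mult_nonneg[OF \<mu>] \<theta> by simp
  ultimately show ?thesis by simp
qed

lemma BG_vec_tanh_qdot_mult_linear_ge:
  fixes w :: "real ^ 'm::finite"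
  assumes \<theta>: "0 \<le> \<theta>" "\<theta> \<le> 1" and \<mu>: "0 < \<mu>"
  shows "(1 - \<theta>) * (\<integral>\<xi>. tanh ((\<Sum>i\<in>UNIV. w$i * \<xi> i) / \<mu>) * (\<Sum>i\<in>UNIV. w$i * \<xi> i) \<partial>BG_prod \<theta>)
    \<le> (\<integral>x. tanh (qdot w x / \<mu>) * (\<Sum>i\<in>UNIV. w$i * fst x i) \<partial>BG_vec \<theta>)"
proof -
  let ?P = "BG_prod \<theta> :: ('m \<Rightarrow> real) measure"
  interpret P: prob_space ?P by (rule prob_space_BG_prod[OF \<theta>])
  interpret B: prob_space "BG \<theta>" by (rule prob_space_BG[OF \<theta>])
  interpret PB: pair_sigma_finite ?P "BG \<theta>" ..
  define X where "X \<xi> = (\<Sum>i\<in>UNIV. w$i * \<xi> i)" for \<xi> :: "'m \<Rightarrow> real"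
  define r where "r = sqrt (1 - (norm w)^2)"
  define f where "f = (\<lambda>(\<xi>, y). tanh ((X \<xi> + r * y) / \<mu>) * X \<xi>)"
  have [measurable]: "X \<in> borel_measurable ?P" "f \<in> borel_measurable (?P \<Otimes>\<^sub>M BG \<theta>)"
    unfolding X_def f_def by measurable
  have "integrable ?P (\<lambda>\<xi>. X \<xi> ^ 1)"
    using BG_prod_linear_form_moments[OF \<theta>, of "\<lambda>i. w$i" UNIV] unfolding X_def by blast
  then have X_integrable: "integrable ?P X"
    by simp
  have tanh_X_integrable: "integrable ?P (\<lambda>\<xi>. tanh (X \<xi> / \<mu>) * X \<xi>)"
    by (rule Bochner_Integration.integrable_bound[OF X_integrable])
      (auto simp: abs_mult intro!: mult_left_le_one_le abs_tanh_le_1)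
  have f_integrable: "integrable (?P \<Otimes>\<^sub>M BG \<theta>) f"
  proof (rule Bochner_Integration.integrable_bound)
    show "integrable (?P \<Otimes>\<^sub>M BG \<theta>) (\<lambda>x. X (fst x))"
      using BG_vec_fst_integral(1)[OF \<theta>, of X] X_integrable by (simp add: BG_vec_def)
    show "AE x in ?P \<Otimes>\<^sub>M BG \<theta>. norm (f x) \<le> norm (X (fst x))"
      by (intro AE_I2)
        (auto simp: f_def abs_mult case_prod_beta intro!: mult_left_le_one_le abs_tanh_le_1)
  qed simp
  have "(1 - \<theta>) * (\<integral>\<xi>. tanh (X \<xi> / \<mu>) * X \<xi> \<partial>?P) = (\<integral>\<xi>. (1 - \<theta>) * (tanh (X \<xi> / \<mu>) * X \<xi>) \<partial>?P)"
    by simp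
  also have "\<dots> \<le> (\<integral>\<xi>. (\<integral>y. f (\<xi>, y) \<partial>BG \<theta>) \<partial>?P)"
    using tanh_X_integrable PB.integrable_fst'[OF f_integrable]
      BG_integral_tanh_shift_mult_ge[OF \<theta> \<mu>]
    by (intro integral_mono) (auto simp: f_def)
  also have "\<dots> = (\<integral>x. f x \<partial>BG_vec \<theta>)"
    unfolding BG_vec_def by (rule PB.integral_fst'[OF f_integrable])
  also have "\<dots> = (\<integral>x. tanh (qdot w x / \<mu>) * X (fst x) \<partial>BG_vec \<theta>)"
    unfolding f_def X_def r_def qdot_def by (simp add: case_prod_beta)
  finally show ?thesis
    unfolding X_def .
qed

lemma BG_prod_tanh_linear_form_ge:
  fixes w :: "'m::finite \<Rightarrow> real"
  assumes \<theta>: "0 \<le> \<theta>" "\<theta> \<le> 1" and \<mu>: "0 < \<mu>" "\<mu> \<le> m"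
  defines "s \<equiv> sqrt (\<Sum>i\<in>UNIV. (w i)^2)"
  shows "\<theta> * s^2 / m - \<theta> * s^4 / m^3
    \<le> (\<integral>\<xi>. tanh ((\<Sum>i\<in>UNIV. w i * \<xi> i) / \<mu>) * (\<Sum>i\<in>UNIV. w i * \<xi> i) \<partial>BG_prod \<theta>)"
proof -
  let ?P = "BG_prod \<theta> :: ('m \<Rightarrow> real) measure"
  interpret P: prob_space ?P by (rule prob_space_BG_prod[OF \<theta>])
  define X where "X \<xi> = (\<Sum>i\<in>UNIV. w i * \<xi> i)" for \<xi> :: "'m \<Rightarrow> real"
  have s2: "s^2 = (\<Sum>i\<in>UNIV. (w i)^2)"
    unfolding s_def by (simp add: sum_nonneg)
  moreover have "s^4 = (\<Sum>i\<in>UNIV. (w i)^2)^2"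
    unfolding s2[symmetric] by simp
  ultimately have X_integrable: "\<And>k. integrable ?P (\<lambda>\<xi>. X \<xi> ^ k)"
    and moments: "(\<integral>\<xi>. X \<xi> ^ 2 \<partial>?P) = \<theta> * s^2" "(\<integral>\<xi>. X \<xi> ^ 4 \<partial>?P) \<le> 3 * \<theta> * s^4"
    using BG_prod_linear_form_moments[OF \<theta>, of w UNIV] unfolding X_def by auto
  have "0 < m" using \<mu> by linarith
  have [measurable]: "X \<in> borel_measurable ?P"
    unfolding X_def by measurable
  have "integrable ?P (\<lambda>\<xi>. tanh (X \<xi> / \<mu>) * X \<xi>)"
    by (rule Bochner_Integration.integrable_bound[OF X_integrable[of 1]])
      (auto simp: abs_mult intro!: mult_left_le_one_le abs_tanh_le_1)
  with X_integrable
  have "(\<integral>\<xi>. X \<xi> ^ 2 / m - X \<xi> ^ 4 / (3 * m^3) \<partial>?P) \<le> (\<integral>\<xi>. tanh (X \<xi> / \<mu>) * X \<xi> \<partial>?P)"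
  proof (intro integral_mono Bochner_Integration.integrable_diff integrable_divide)
    fix \<xi>
    show "X \<xi> ^ 2 / m - X \<xi> ^ 4 / (3 * m^3) \<le> tanh (X \<xi> / \<mu>) * X \<xi>"
      using x_mult_tanh_ge_quartic[OF \<mu>, of "X \<xi>"] by (simp only: mult.commute)
  qed
  moreover have "(\<integral>\<xi>. X \<xi> ^ 2 / m - X \<xi> ^ 4 / (3 * m^3) \<partial>?P)
      = (\<integral>\<xi>. X \<xi> ^ 2 \<partial>?P) / m - (\<integral>\<xi>. X \<xi> ^ 4 \<partial>?P) / (3 * m^3)"
    using X_integrable by simp
  moreover have "(\<integral>\<xi>. X \<xi> ^ 4 \<partial>?P) / (3 * m^3) \<le> 3 * \<theta> * s^4 / (3 * m^3)"
    using moments(2) \<open>0 < m\<close> by (intro divide_right_mono) auto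
  ultimately show ?thesis
    using moments(1) unfolding X_def by simp
qed

lemma BG_vec_bounded_mult_snd_le:
  fixes g :: "('m::finite \<Rightarrow> real) \<times> real \<Rightarrow> real"
  assumes \<theta>: "0 \<le> \<theta>" "\<theta> \<le> 1" and [measurable]: "g \<in> borel_measurable (BG_vec \<theta>)"
    and g: "\<And>x. \<bar>g x\<bar> \<le> 1"
  shows "(\<integral>x. g x * snd x \<partial>BG_vec \<theta>) \<le> \<theta>"
proof -
  have "(\<integral>x. g x * snd x \<partial>BG_vec \<theta>)
      \<le> (\<integral>x. \<bar>snd x\<bar> \<partial>(BG_vec \<theta> :: (('m \<Rightarrow> real) \<times> real) measure))"
    using BG_vec_integrable_bounded_mult(1)[OF assms] BG_vec_coordinate_moments(1)[OF \<theta>]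
  proof (rule integral_mono)
    fix x
    show "g x * snd x \<le> \<bar>snd x\<bar>"
    proof -
      have "\<bar>g x\<bar> * \<bar>snd x\<bar> \<le> \<bar>snd x\<bar>"
        using g[of x] by (simp add: mult_left_le_one_le)
      then show ?thesis
        by (metis abs_ge_self abs_mult order.trans)
    qed
  qed
  also have "\<dots> \<le> \<theta>"
    by (rule BG_vec_coordinate_moments(5)[OF \<theta>])
  finally show ?thesis .
qed

lemma objective_deriv_self_ge:
  fixes w :: "real ^ 'm::finite"
  assumes \<theta>: "0 \<le> \<theta>" "\<theta> \<le> 1" and \<mu>: "0 < \<mu>" "\<mu> \<le> m" and w: "norm w < 1/2"
  shows "(1 - \<theta>) * (\<theta> * (norm w)^2 / m - \<theta> * (norm w)^4 / m^3)
      - (norm w)^2 / sqrt (1 - (norm w)^2) * \<theta>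
    \<le> objective_deriv \<theta> \<mu> w w"
proof -
  define t where "t x = tanh (qdot w x / \<mu>)" for x :: "('m \<Rightarrow> real) \<times> real"
  define r where "r = sqrt (1 - (norm w)^2)"
  have "0 < r"
    unfolding r_def using w by (simp add: abs_square_less_1)
  have [measurable]: "t \<in> borel_measurable (BG_vec \<theta>)"
    unfolding t_def by measurable
  have "norm w = sqrt (\<Sum>i\<in>UNIV. (w$i)^2)"
    by (simp add: norm_vec_def L2_set_def)
  then have "\<theta> * (norm w)^2 / m - \<theta> * (norm w)^4 / m^3
      \<le> (\<integral>\<xi>. tanh ((\<Sum>i\<in>UNIV. w$i * \<xi> i) / \<mu>) * (\<Sum>i\<in>UNIV. w$i * \<xi> i) \<partial>BG_prod \<theta>)"
    using BG_prod_tanh_linear_form_ge[OF \<theta> \<mu>, of "\<lambda>i. w$i"] by simp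
  also have "(1 - \<theta>) * \<dots> \<le> (\<integral>x. t x * (\<Sum>i\<in>UNIV. w$i * fst x i) \<partial>BG_vec \<theta>)"
    unfolding t_def by (rule BG_vec_tanh_qdot_mult_linear_ge[OF \<theta> \<mu>(1)])
  also have "\<dots> = (\<Sum>i\<in>UNIV. w$i * (\<integral>x. t x * fst x i \<partial>BG_vec \<theta>))"
    using objective_deriv_integrand(2)[OF \<theta>, where w=w and \<mu>=\<mu> and d=w and c=0]
    unfolding t_def by simp
  finally have first: "(1 - \<theta>) * (\<theta> * (norm w)^2 / m - \<theta> * (norm w)^4 / m^3)
      \<le> (\<Sum>i\<in>UNIV. w$i * (\<integral>x. t x * fst x i \<partial>BG_vec \<theta>))"
    using \<theta> by (simp add: mult_left_mono)
  have "(\<integral>x. t x * snd x \<partial>BG_vec \<theta>) \<le> \<theta>"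
    by (rule BG_vec_bounded_mult_snd_le[OF \<theta>]) (auto simp: t_def abs_tanh_le_1)
  then have second: "(norm w)^2 / r * (\<integral>x. t x * snd x \<partial>BG_vec \<theta>) \<le> (norm w)^2 / r * \<theta>"
    using \<open>0 < r\<close> by (intro mult_left_mono) auto
  have "objective_deriv \<theta> \<mu> w w = (\<Sum>i\<in>UNIV. w$i * (\<integral>x. t x * fst x i \<partial>BG_vec \<theta>))
      - (norm w)^2 / r * (\<integral>x. t x * snd x \<partial>BG_vec \<theta>)"
    using objective_deriv_integrand(2)[OF \<theta>, where w=w and \<mu>=\<mu> and d=w and c="(w \<bullet> w) / r"]
    unfolding objective_deriv_def t_def r_def by (simp add: power2_norm_eq_inner)
  then show ?thesis
    using first second unfolding r_def by linarith
qed

lemma numeric_margin_ge: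
  fixes \<theta> s :: real
  assumes \<theta>: "0 < \<theta>" "\<theta> < 1/2" and s: "0 < s" "s \<le> 1 / (20 * sqrt 5)"
  shows "1/48 \<le> (1 - \<theta>) * (31 / (4 * sqrt 2)^3) - s / sqrt (1 - s^2)"
proof -
  have "2.2 \<le> sqrt 5"
    by (rule real_le_rsqrt) (simp add: power2_eq_square)
  then have "1 / (20 * sqrt 5) \<le> 1 / (20 * 2.2)"
    by (intro divide_left_mono) auto
  then have "s \<le> 1/44"
    using s by linarith
  then have "s^2 \<le> (1/44)^2"
    using s by (intro power_mono) auto
  then have "99/100 \<le> sqrt (1 - s^2)"
    by (intro real_le_rsqrt) (simp add: power2_eq_square)
  moreover have "0 < sqrt (1 - s^2)"
    using calculation by linarith
  ultimately have "s / sqrt (1 - s^2) \<le> 23/1000"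
    using \<open>s \<le> 1/44\<close> s by (simp add: field_simps)
  moreover have "sqrt 2 \<le> sqrt (1.42^2)"
    by (rule real_sqrt_le_mono) (simp add: power2_eq_square)
  then have "sqrt 2 \<le> 1.42"
    by simp
  then have "17/100 \<le> 31 / (4 * sqrt 2)^3"
    by (simp add: field_simps power3_eq_cube)
  then have "(1/2) * (17/100) \<le> (1 - \<theta>) * (31 / (4 * sqrt 2)^3)"
    using \<theta> by (intro mult_mono) auto
  ultimately show ?thesis
    by linarith
qed

lemma lower_bound_numeric:
  fixes \<theta> \<mu> s :: real
  assumes \<theta>: "0 < \<theta>" "\<theta> < 1/2" and \<mu>: "0 < \<mu>" "\<mu> \<le> 4 * sqrt 2 * s"
    and s: "s \<le> 1 / (20 * sqrt 5)"
  defines "m \<equiv> 4 * sqrt 2 * s"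
  shows "\<theta> / (20 * sqrt (2 * pi))
    \<le> ((1 - \<theta>) * (\<theta> * s^2 / m - \<theta> * s^4 / m^3) - s^2 / sqrt (1 - s^2) * \<theta>) / s"
proof -
  define k where "k = 4 * sqrt 2"
  define r where "r = sqrt (1 - s^2)"
  have "0 < k" "k^2 = 32"
    unfolding k_def by (simp_all add: power_mult_distrib)
  have "0 < k * s"
    using \<mu> unfolding k_def by linarith
  then have "0 < s"
    using \<open>0 < k\<close> by (simp add: zero_less_mult_iff)
  have "\<theta> * s^2 / (k * s) - \<theta> * s^4 / (k * s)^3 = s * \<theta> * ((k^2 - 1) / k^3)"
    using \<open>0 < s\<close> \<open>0 < k\<close> by (simp add: field_simps power2_eq_square power3_eq_cube power4_eq_xxxx)
  then have expr: "(1 - \<theta>) * (\<theta> * s^2 / m - \<theta> * s^4 / m^3) - s^2 / r * \<theta>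
      = s * (\<theta> * ((1 - \<theta>) * (31 / k^3) - s / r))"
    unfolding m_def k_def[symmetric] \<open>k^2 = 32\<close> by (simp add: algebra_simps power2_eq_square)
  have "2.4 \<le> sqrt (2 * pi)"
    by (rule real_le_rsqrt) (use pi_gt3 in \<open>simp add: power2_eq_square\<close>)
  then have "\<theta> / (20 * sqrt (2 * pi)) \<le> \<theta> / 48"
    using \<theta> by (intro divide_left_mono) auto
  also have "\<dots> \<le> \<theta> * ((1 - \<theta>) * (31 / k^3) - s / r)"
    using mult_left_mono[OF numeric_margin_ge[OF \<theta> \<open>0 < s\<close> s], of \<theta>] \<theta>
    unfolding k_def r_def by simp
  also have "\<dots> = ((1 - \<theta>) * (\<theta> * s^2 / m - \<theta> * s^4 / m^3) - s^2 / r * \<theta>) / s"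
    unfolding expr using \<open>0 < s\<close> by simp
  finally show ?thesis
    unfolding r_def .
qed

theorem mainTheorem6:
  fixes w :: "real ^ 'm" and \<theta> \<mu> :: real
  assumes "0 < \<theta>" and "\<theta> < 1/2"
    and "0 < \<mu>" and "\<mu> \<le> 9/50"
    and "\<mu> / (4 * sqrt 2) \<le> norm w" and "norm w \<le> 1 / (20 * sqrt 5)"
  shows "\<exists>D. (objective \<theta> \<mu> has_derivative D) (at w) \<and>
             D w / norm w \<ge> \<theta> / (20 * sqrt (2 * pi))"
proof (intro exI conjI)
  have \<theta>: "0 \<le> \<theta>" "\<theta> \<le> 1"
    using assms(1,2) by auto
  have "0 < 4 * sqrt 2" by simp
  then have \<mu>: "\<mu> \<le> 4 * sqrt 2 * norm w"
    using pos_divide_le_eq[of "4 * sqrt 2" \<mu> "norm w"] assms(5) by (simp add: mult.commute)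
  then have "0 < 4 * sqrt 2 * norm w"
    using assms(3) by linarith
  then have "0 < norm w"
    by (simp add: zero_less_mult_iff)
  have "1 / (20 * sqrt 5) \<le> 1 / 20"
    by (intro divide_left_mono) auto
  then have w: "norm w < 1/2"
    using assms(6) by linarith
  show "(objective \<theta> \<mu> has_derivative objective_deriv \<theta> \<mu> w) (at w)"
    by (rule has_derivative_objective[OF \<theta> assms(3) w])
  have "(1 - \<theta>) * (\<theta> * (norm w)^2 / (4 * sqrt 2 * norm w) - \<theta> * (norm w)^4 / (4 * sqrt 2 * norm w)^3)
      - (norm w)^2 / sqrt (1 - (norm w)^2) * \<theta> \<le> objective_deriv \<theta> \<mu> w w"
    by (rule objective_deriv_self_ge[OF \<theta> assms(3) \<mu> w])
  then have "\<dots> / norm w \<ge> ((1 - \<theta>) * (\<theta> * (norm w)^2 / (4 * sqrt 2 * norm w)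
      - \<theta> * (norm w)^4 / (4 * sqrt 2 * norm w)^3) - (norm w)^2 / sqrt (1 - (norm w)^2) * \<theta>) / norm w"
    using \<open>0 < norm w\<close> by (intro divide_right_mono) auto
  with lower_bound_numeric[OF assms(1-3) \<mu> assms(6)]
  show "\<theta> / (20 * sqrt (2 * pi)) \<le> objective_deriv \<theta> \<mu> w w / norm w"
    by linarith
qed

end
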